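(* Let $R_0^*\in SO(3)$ with unit quaternion representation $w_0^*\in\mathbb{S}^3$, let $x_1,\dots,x_\ell\in\mathbb{R}^3$, $y_i=R_0^*x_i$ for all $i=1,\dots,\ell$ (no noise and no outliers), and $c_1^2,\dots,c_\ell^2\ge0$. Let $\omega^*=[w_0^*;\dots;w_0^*]\in\mathbb{R}^{4(\ell+1)}$ ($w_0^*$ repeated $\ell+1$ times). Then $\omega^*$ is a global minimizer of (QCQP) and $\omega^*(\omega^* )^\top$ globally minimizes (SDR); in particular (SDR) is tight.
   Context: For $w=[w_1;w_2;w_3;w_4]\in\mathbb{S}^3$, $R(w)=\begin{bmatrix} w_1^2+w_2^2-w_3^2-w_4^2 & 2(w_2w_3-w_1w_4) & 2(w_2w_4+w_1w_3)\\ 2(w_2w_3+w_1w_4) & w_1^2+w_3^2-w_2^2-w_4^2 & 2(w_3w_4-w_1w_2)\\ 2(w_2w_4-w_1w_3) & 2(w_3w_4+w_1w_2) & w_1^2+w_4^2-w_2^2-w_3^2\end{bmatrix}\in SO(3)$; $w$ and $-w$ are the unit quaternion representations of $R(w)$. $Q_i$ is the unique symmetric $4\times4$ matrix with $w^\top Q_iw=\|y_i-R(w)x_i\|_2^2$ for all $w\in\mathbb{S}^3$. For $\mathcal{A}\in\mathbb{R}^{4(\ell+1)\times4(\ell+1)}$, $[\mathcal{A}]_{ij}$ ($0\le i,j\le\ell$) is the $4\times4$ block in rows $4i+1..4i+4$, columns $4j+1..4j+4$. $\mathcal{Q}$ is symmetric with $[\mathcal{Q}]_{0i}=[\mathcal{Q}]_{i0}=\frac12(Q_i-c_i^2I_4)$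 ($i\ge1$), other blocks zero. (QCQP): minimize $\operatorname{tr}(\mathcal{Q}\omega\omega^\top)+\sum_ic_i^2$ over $\omega\in\mathbb{R}^{4(\ell+1)}$ s.t. $[\omega\omega^\top]_{0i}=[\omega\omega^\top]_{ii}$ ($i=1..\ell$), $\operatorname{tr}([\omega\omega^\top]_{00})=1$. (SDR): minimize $\operatorname{tr}(\mathcal{Q}\mathcal{W})+\sum_ic_i^2$ over symmetric $\mathcal{W}\succeq0$ s.t. $[\mathcal{W}]_{0i}=[\mathcal{W}]_{ii}$ ($i=1..\ell$), $\operatorname{tr}([\mathcal{W}]_{00})=1$. (SDR) is tight if it admits $\hat\omega\hat\omega^\top$ as a global minimizer, where $\hat\omega$ is a global minimizer of (QCQP). *)

theory Defs
  imports "HOL-Analysis.Analysis"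
begin

definition Rq :: "real^4 \<Rightarrow> real^3^3" where
  "Rq w = (let w1 = w$1; w2 = w$2; w3 = w$3; w4 = w$4 in
     vector [
       vector [w1^2+w2^2-w3^2-w4^2, 2*(w2*w3-w1*w4), 2*(w2*w4+w1*w3)],
       vector [2*(w2*w3+w1*w4), w1^2+w3^2-w2^2-w4^2, 2*(w3*w4-w1*w2)],
       vector [2*(w2*w4-w1*w3), 2*(w3*w4+w1*w2), w1^2+w4^2-w2^2-w3^2]])"

definition Qmat :: "real^3 \<Rightarrow> real^3 \<Rightarrow> real^4^4" where
  "Qmat x y = (THE Q. transpose Q = Q \<and>
       (\<forall>w::real^4. norm w = 1 \<longrightarrow> w \<bullet> (Q *v w) = (norm (y - Rq w *v x))^2))"

definition idx4 :: "nat \<Rightarrow> 4" where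
  "idx4 a = (if a = 0 then 1 else if a = 1 then 2 else if a = 2 then 3 else 4)"

text \<open>Matrices in R^{4(l+1) x 4(l+1)} are represented by nat \<Rightarrow> nat \<Rightarrow> real
  (0-based indices below N = 4(l+1)), vectors by nat \<Rightarrow> real.
  Block [A]_{ij} occupies rows 4i..4i+3 and columns 4j..4j+3 (0-based).\<close>

definition bigQ :: "nat \<Rightarrow> (nat \<Rightarrow> real^4^4) \<Rightarrow> (nat \<Rightarrow> real) \<Rightarrow> nat \<Rightarrow> nat \<Rightarrow> real" where
  "bigQ l Q csq p q =
     (let bi = p div 4; bj = q div 4; a = p mod 4; b = q mod 4 in
      if bi = 0 \<and> 1 \<le> bj \<and> bj \<le> l then
        (Q bj $ idx4 a $ idx4 b - (if a = b then csq bj else 0)) / 2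
      else if bj = 0 \<and> 1 \<le> bi \<and> bi \<le> l then
        (Q bi $ idx4 a $ idx4 b - (if a = b then csq bi else 0)) / 2
      else 0)"

definition gram :: "(nat \<Rightarrow> real) \<Rightarrow> nat \<Rightarrow> nat \<Rightarrow> real" where
  "gram v = (\<lambda>p q. v p * v q)"

definition trprod :: "nat \<Rightarrow> (nat \<Rightarrow> nat \<Rightarrow> real) \<Rightarrow> (nat \<Rightarrow> nat \<Rightarrow> real) \<Rightarrow> real" where
  "trprod l A W = (\<Sum>p<4*(l+1). \<Sum>q<4*(l+1). A p q * W q p)"

definition constr :: "nat \<Rightarrow> (nat \<Rightarrow> nat \<Rightarrow> real) \<Rightarrow> bool" where
  "constr l W \<longleftrightarrow>
     (\<forall>i\<in>{1..l}. \<forall>a<4. \<forall>b<4. W a (4*i+b) = W (4*i+a) (4*i+b)) \<and>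
     (\<Sum>a<4. W a a) = 1"

definition objective :: "nat \<Rightarrow> (nat \<Rightarrow> real^4^4) \<Rightarrow> (nat \<Rightarrow> real) \<Rightarrow> (nat \<Rightarrow> nat \<Rightarrow> real) \<Rightarrow> real" where
  "objective l Q csq W = trprod l (bigQ l Q csq) W + (\<Sum>i\<in>{1..l}. csq i)"

definition sym_psd :: "nat \<Rightarrow> (nat \<Rightarrow> nat \<Rightarrow> real) \<Rightarrow> bool" where
  "sym_psd l W \<longleftrightarrow>
     (\<forall>p<4*(l+1). \<forall>q<4*(l+1). W p q = W q p) \<and>
     (\<forall>v::nat \<Rightarrow> real. (\<Sum>p<4*(l+1). \<Sum>q<4*(l+1). v p * W p q * v q) \<ge> 0)"

definition qcqp_global_min :: "nat \<Rightarrow> (nat \<Rightarrow> real^4^4) \<Rightarrow> (nat \<Rightarrow> real) \<Rightarrow> (nat \<Rightarrow> real) \<Rightarrow> bool" where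
  "qcqp_global_min l Q csq \<omega> \<longleftrightarrow>
     constr l (gram \<omega>) \<and>
     (\<forall>\<omega>'. constr l (gram \<omega>') \<longrightarrow> objective l Q csq (gram \<omega>) \<le> objective l Q csq (gram \<omega>'))"

definition sdr_global_min :: "nat \<Rightarrow> (nat \<Rightarrow> real^4^4) \<Rightarrow> (nat \<Rightarrow> real) \<Rightarrow> (nat \<Rightarrow> nat \<Rightarrow> real) \<Rightarrow> bool" where
  "sdr_global_min l Q csq W \<longleftrightarrow>
     sym_psd l W \<and> constr l W \<and>
     (\<forall>W'. sym_psd l W' \<and> constr l W' \<longrightarrow> objective l Q csq W \<le> objective l Q csq W')"

definition sdr_tight :: "nat \<Rightarrow> (nat \<Rightarrow> real^4^4) \<Rightarrow> (nat \<Rightarrow> real) \<Rightarrow> bool" where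
  "sdr_tight l Q csq \<longleftrightarrow> (\<exists>\<omega>. qcqp_global_min l Q csq \<omega> \<and> sdr_global_min l Q csq (gram \<omega>))"

definition rep_quat :: "nat \<Rightarrow> real^4 \<Rightarrow> nat \<Rightarrow> real" where
  "rep_quat l w p = (if p < 4*(l+1) then w $ idx4 (p mod 4) else 0)"

end

theory Submission
  imports Defs
begin

text \<open>For a unit quaternion w the residual y - R(w)x has the same norm as the quaternion
  y w - w x, which is linear in w; hence each Q_i is a Gram matrix L_i^T L_i and is positive
  semidefinite. For a feasible W of (SDR) the constraints [W]_0i = [W]_ii collapse the objective to
  \<Sum>_i tr(Q_i [W]_ii) + c_i^2 (1 - tr [W]_ii), and positive semidefiniteness of W gives
  [W]_ii \<preceq> [W]_00, so tr [W]_ii \<le> 1. Every term is therefore nonnegative, while for noise-free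
  data the lifted true rotation \<omega>* attains the value 0.\<close>

text \<open>With x, y read as pure quaternions, residual_matrix x y *v w is the quaternion product
  y w - w x.\<close>

definition residual_matrix :: "real^3 \<Rightarrow> real^3 \<Rightarrow> real^4^4" where
  "residual_matrix x y = (\<chi> k j.
     if k = 1 then (if j = 1 then 0 else if j = 2 then x$1 - y$1 else if j = 3 then x$2 - y$2 else x$3 - y$3)
     else if k = 2 then (if j = 1 then y$1 - x$1 else if j = 2 then 0 else if j = 3 then -(y$3 + x$3) else y$2 + x$2)
     else if k = 3 then (if j = 1 then y$2 - x$2 else if j = 2 then y$3 + x$3 else if j = 3 then 0 else -(y$1 + x$1))
     else (if j = 1 then y$3 - x$3 else if j = 2 then -(y$2 + x$2) else if j = 3 then y$1 + x$1 else 0))"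

lemma norm_pow_2_vec3: "(norm (v::real^3))\<^sup>2 = (v$1)\<^sup>2 + (v$2)\<^sup>2 + (v$3)\<^sup>2"
  unfolding power2_norm_eq_inner inner_vec_def sum_3 by (simp add: power2_eq_square)

lemma norm_pow_2_vec4: "(norm (v::real^4))\<^sup>2 = (v$1)\<^sup>2 + (v$2)\<^sup>2 + (v$3)\<^sup>2 + (v$4)\<^sup>2"
  unfolding power2_norm_eq_inner inner_vec_def sum_4 by (simp add: power2_eq_square)

lemma norm_Rq_mult_pow_2: "(norm (Rq w *v x))\<^sup>2 = ((norm w)\<^sup>2)\<^sup>2 * (norm x)\<^sup>2"
  unfolding norm_pow_2_vec3 norm_pow_2_vec4
  by (simp add: Rq_def matrix_vector_mult_def sum_3 Let_def) algebra

lemma norm_residual_matrix_mult_pow_2: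
  "(norm (residual_matrix x y *v w))\<^sup>2 =
     (norm w)\<^sup>2 * ((norm x)\<^sup>2 + (norm y)\<^sup>2) - 2 * (y \<bullet> (Rq w *v x))"
  unfolding norm_pow_2_vec3 norm_pow_2_vec4
  by (simp add: Rq_def residual_matrix_def matrix_vector_mult_def inner_vec_def sum_3 sum_4 Let_def)
    algebra

lemma norm_residual_matrix_mult:
  assumes "norm w = 1"
  shows "(norm (residual_matrix x y *v w))\<^sup>2 = (norm (y - Rq w *v x))\<^sup>2"
proof -
  have "(norm (y - Rq w *v x))\<^sup>2 = (norm y)\<^sup>2 - 2 * (y \<bullet> (Rq w *v x)) + (norm (Rq w *v x))\<^sup>2"
    by (simp add: power2_norm_eq_inner inner_diff_left inner_diff_right inner_commute)
  then show ?thesis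
    using assms by (simp add: norm_residual_matrix_mult_pow_2 norm_Rq_mult_pow_2)
qed

lemma inner_transpose_mult_mult_self:
  fixes L :: "real^'n^'m"
  shows "w \<bullet> ((transpose L ** L) *v w) = (norm (L *v w))\<^sup>2"
proof -
  have "(transpose L ** L) *v w = (L *v w) v* L"
    by (simp flip: matrix_vector_mul_assoc)
  then show ?thesis
    by (metis power2_norm_eq_inner inner_commute dot_lmul_matrix)
qed

lemma symmetric_matrix_eq_0_if_sphere_form_eq_0:
  fixes D :: "real^'n^'n"
  assumes sym: "transpose D = D" and sphere: "\<And>w. norm w = 1 \<Longrightarrow> w \<bullet> (D *v w) = 0"
  shows "D = 0"
proof -
  have form: "w \<bullet> (D *v w) = 0" for w
  proof (cases "w = 0")
    case False
    then have "(1 / norm w)\<^sup>2 * (w \<bullet> (D *v w)) = 0"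
      using sphere[of "(1 / norm w) *\<^sub>R w"] by (simp add: matrix_vector_mult_scaleR power2_eq_square)
    then show ?thesis using False by simp
  qed simp
  have bilinear: "a \<bullet> (D *v b) = 0" for a b
  proof -
    have "b \<bullet> (D *v a) = a \<bullet> (D *v b)"
      by (metis sym dot_lmul_matrix inner_commute transpose_matrix_vector)
    moreover have "(a + b) \<bullet> (D *v (a + b)) =
        a \<bullet> (D *v a) + a \<bullet> (D *v b) + b \<bullet> (D *v a) + b \<bullet> (D *v b)"
      by (simp add: matrix_vector_right_distrib inner_add_left inner_add_right)
    ultimately show ?thesis using form[of a] form[of b] form[of "a + b"] by simp
  qed
  show ?thesis
    unfolding vec_eq_iff
  proof (intro allI)
    fix i j
    have "(D *v axis j 1) $ i = D $ i $ j"
      by (simp add: matrix_vector_mult_def axis_def if_distrib cong: if_cong)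
    then have "axis i 1 \<bullet> (D *v axis j 1) = D $ i $ j"
      by (simp add: inner_axis')
    then show "D $ i $ j = 0 $ i $ j" using bilinear by simp
  qed
qed

lemma Qmat_eq_residual_matrix: "Qmat x y = transpose (residual_matrix x y) ** residual_matrix x y"
  unfolding Qmat_def
proof (rule the_equality)
  let ?G = "transpose (residual_matrix x y) ** residual_matrix x y"
  have form: "w \<bullet> (?G *v w) = (norm (y - Rq w *v x))\<^sup>2" if "norm w = 1" for w
    using that by (simp add: inner_transpose_mult_mult_self norm_residual_matrix_mult)
  moreover have sym: "transpose ?G = ?G"
    by (simp add: matrix_transpose_mul)
  ultimately show "transpose ?G = ?G \<and>
      (\<forall>w. norm w = 1 \<longrightarrow> w \<bullet> (?G *v w) = (norm (y - Rq w *v x))\<^sup>2)"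
    by blast
  fix Q
  assume Q: "transpose Q = Q \<and>
    (\<forall>w. norm w = 1 \<longrightarrow> w \<bullet> (Q *v w) = (norm (y - Rq w *v x))\<^sup>2)"
  have "Q - ?G = 0"
  proof (rule symmetric_matrix_eq_0_if_sphere_form_eq_0)
    show "transpose (Q - ?G) = Q - ?G"
      using Q sym by (simp add: transpose_def vec_eq_iff)
    show "w \<bullet> ((Q - ?G) *v w) = 0" if "norm w = 1" for w
      using Q form[OF that] that by (simp add: matrix_vector_mult_diff_rdistrib inner_diff_right)
  qed
  then show "Q = ?G" by simp
qed

lemma sum_lessThan_mult_4:
  "(\<Sum>p<4*n. f p) = (\<Sum>i<n. \<Sum>a<4. f (4*i + a :: nat))"
proof -
  have "(\<Sum>p<4*n. f p) = (\<Sum>i<n. \<Sum>p\<in>{i*4..<i*4 + 4}. f p)"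
    by (simp add: sum.nat_group mult.commute)
  also have "\<dots> = (\<Sum>i<n. \<Sum>a<4. f (4*i + a))"
    by (simp add: sum.atLeastLessThan_shift_0 atLeast0LessThan comp_def mult.commute)
  finally show ?thesis .
qed

lemma sum_lessThan_4_idx4: "(\<Sum>a<4. g (idx4 a)) = sum g UNIV"
  by (simp add: numeral_eq_Suc lessThan_Suc idx4_def sum_4 ac_simps)

lemma bigQ_block:
  assumes "a < 4" "b < 4"
  shows "bigQ l Q csq (4*i + a) (4*j + b) =
    (if i = 0 \<and> 1 \<le> j \<and> j \<le> l then (Q j $ idx4 a $ idx4 b - (if a = b then csq j else 0)) / 2
     else if j = 0 \<and> 1 \<le> i \<and> i \<le> l then (Q i $ idx4 a $ idx4 b - (if a = b then csq i else 0)) / 2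
     else 0)"
  using assms by (simp add: bigQ_def Let_def)

lemma trprod_bigQ:
  "trprod l (bigQ l Q csq) W = (\<Sum>j\<in>{1..l}. \<Sum>a<4. \<Sum>b<4.
     (Q j $ idx4 a $ idx4 b - (if a = b then csq j else 0)) / 2 * (W (4*j + b) a + W b (4*j + a)))"
proof -
  define T where "T i j = (\<Sum>a<4. \<Sum>b<4. bigQ l Q csq (4*i + a) (4*j + b) * W (4*j + b) (4*i + a))"
    for i j
  have "trprod l (bigQ l Q csq) W = (\<Sum>i<l+1. \<Sum>j<l+1. T i j)"
    unfolding trprod_def sum_lessThan_mult_4 T_def by (intro sum.cong refl sum.swap)
  also have "\<dots> = (\<Sum>j\<in>{1..l}. T 0 j + T j 0)"
  proof -
    have "{..<l+1} = insert 0 {1..l}" by auto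
    moreover have "T i j = 0" if "i = 0 \<and> j = 0 \<or> i \<in> {1..l} \<and> j \<in> {1..l}" for i j
      unfolding T_def using that by (intro sum.neutral ballI) (auto simp: bigQ_block)
    ultimately show ?thesis by (simp add: sum.distrib)
  qed
  also have "\<dots> = (\<Sum>j\<in>{1..l}. \<Sum>a<4. \<Sum>b<4.
     (Q j $ idx4 a $ idx4 b - (if a = b then csq j else 0)) / 2 * (W (4*j + b) a + W b (4*j + a)))"
    unfolding T_def sum.distrib[symmetric] distrib_left
    by (intro sum.cong refl)
      (auto simp: bigQ_block[of _ _ l Q csq 0, simplified] bigQ_block[of _ _ l Q csq _ 0, simplified])
  finally show ?thesis .
qed

text \<open>frob_block M W j is tr(M [W]_jj) for symmetric M.\<close>

definition frob_block :: "real^4^4 \<Rightarrow> (nat \<Rightarrow> nat \<Rightarrow> real) \<Rightarrow> nat \<Rightarrow> real" where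
  "frob_block M W j = (\<Sum>a<4. \<Sum>b<4. M $ idx4 a $ idx4 b * W (4*j + a) (4*j + b))"

definition trace_block :: "(nat \<Rightarrow> nat \<Rightarrow> real) \<Rightarrow> nat \<Rightarrow> real" where
  "trace_block W j = (\<Sum>a<4. W (4*j + a) (4*j + a))"

lemma objective_eq_sum_blocks:
  assumes sym: "\<forall>p<4*(l+1). \<forall>q<4*(l+1). W p q = W q p" and "constr l W"
  shows "objective l Q csq W = (\<Sum>j\<in>{1..l}. frob_block (Q j) W j + csq j * (1 - trace_block W j))"
proof -
  have off_diag: "W (4*j + b) a + W b (4*j + a) = 2 * W (4*j + a) (4*j + b)"
    if "j \<in> {1..l}" "a < 4" "b < 4" for j a b
  proof -
    have block: "W a' (4*j + b') = W (4*j + a') (4*j + b')" if "a' < 4" "b' < 4" for a' b'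
      using \<open>constr l W\<close> \<open>j \<in> {1..l}\<close> that unfolding constr_def by blast
    have in_range: "a < 4*(l+1)" "b < 4*(l+1)" "4*j + a < 4*(l+1)" "4*j + b < 4*(l+1)"
      using that by auto
    have "W (4*j + b) a = W (4*j + a) (4*j + b)"
      using sym in_range block[of a b] that by simp
    moreover have "W b (4*j + a) = W (4*j + a) (4*j + b)"
      using sym in_range block[of b a] that by simp
    ultimately show ?thesis by simp
  qed
  have "trprod l (bigQ l Q csq) W = (\<Sum>j\<in>{1..l}. \<Sum>a<4. \<Sum>b<4.
      Q j $ idx4 a $ idx4 b * W (4*j + a) (4*j + b) - (if a = b then csq j * W (4*j + a) (4*j + b) else 0))"
    unfolding trprod_bigQ by (intro sum.cong refl) (simp add: off_diag left_diff_distrib)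
  also have "\<dots> = (\<Sum>j\<in>{1..l}. frob_block (Q j) W j - csq j * trace_block W j)"
    by (simp add: frob_block_def trace_block_def sum_subtractf sum_distrib_left)
  finally show ?thesis
    unfolding objective_def by (simp add: sum_subtractf sum.distrib algebra_simps)
qed

lemma sym_psd_restrict:
  assumes "sym_psd l W" and S: "S \<subseteq> {..<4*(l+1)}"
  shows "0 \<le> (\<Sum>p\<in>S. \<Sum>q\<in>S. v p * W p q * v q)"
proof -
  define v' where "v' p = (if p \<in> S then v p else 0)" for p
  have "0 \<le> (\<Sum>p<4*(l+1). \<Sum>q<4*(l+1). v' p * W p q * v' q)"
    using assms(1) unfolding sym_psd_def by blast
  also have "\<dots> = (\<Sum>p\<in>S. \<Sum>q<4*(l+1). v' p * W p q * v' q)"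
    by (rule sum.mono_neutral_right) (use S in \<open>auto simp: v'_def\<close>)
  also have "\<dots> = (\<Sum>p\<in>S. \<Sum>q\<in>S. v' p * W p q * v' q)"
    by (intro sum.cong refl sum.mono_neutral_right) (use S in \<open>auto simp: v'_def\<close>)
  also have "\<dots> = (\<Sum>p\<in>S. \<Sum>q\<in>S. v p * W p q * v q)"
    by (intro sum.cong refl) (simp add: v'_def)
  finally show ?thesis .
qed

lemma sym_psd_diag_block:
  assumes "sym_psd l W" "j \<le> l"
  shows "0 \<le> (\<Sum>a<4. \<Sum>b<4. f a * W (4*j + a) (4*j + b) * f b)"
proof -
  let ?S = "(\<lambda>a. 4*j + a) ` {..<4::nat}"
  have inj: "inj_on (\<lambda>a. 4*j + a) {..<4::nat}" by (auto simp: inj_on_def)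
  have "0 \<le> (\<Sum>p\<in>?S. \<Sum>q\<in>?S. f (p - 4*j) * W p q * f (q - 4*j))"
    by (rule sym_psd_restrict[OF assms(1)]) (use assms(2) in auto)
  then show ?thesis by (simp add: sum.reindex[OF inj])
qed

lemma frob_block_transpose_mult_self_nonneg:
  assumes "sym_psd l W" "j \<le> l"
  shows "0 \<le> frob_block (transpose L ** L) W j"
proof -
  have "frob_block (transpose L ** L) W j =
      (\<Sum>k\<in>UNIV. \<Sum>a<4. \<Sum>b<4. L $ k $ idx4 a * W (4*j + a) (4*j + b) * L $ k $ idx4 b)"
    unfolding frob_block_def matrix_matrix_mult_def transpose_def
    by (simp add: sum_distrib_right algebra_simps sum.swap[of _ UNIV "{..<4::nat}"])
  also have "\<dots> \<ge> 0"
    by (intro sum_nonneg sym_psd_diag_block[OF assms])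
  finally show ?thesis .
qed

lemma trace_block_le_1:
  assumes "sym_psd l W" "constr l W" "j \<in> {1..l}"
  shows "trace_block W j \<le> 1"
proof -
  have "W (4*j + a) (4*j + a) \<le> W a a" if a: "a < 4" for a
  proof -
    \<comment> \<open>test W against e_a - e_(4j+a) and use [W]_0j = [W]_jj\<close>
    define v where "v p = (if p = a then 1 else if p = 4*j + a then -1 else (0::real))" for p
    have S: "{a, 4*j + a} \<subseteq> {..<4*(l+1)}" and ne: "a \<noteq> 4*j + a"
      using assms(3) a by auto
    have "0 \<le> (\<Sum>p\<in>{a, 4*j + a}. \<Sum>q\<in>{a, 4*j + a}. v p * W p q * v q)"
      by (rule sym_psd_restrict[OF assms(1) S])
    also have "\<dots> = W a a - W a (4*j + a) - W (4*j + a) a + W (4*j + a) (4*j + a)"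
      using ne by (simp add: v_def)
    also have "W (4*j + a) a = W a (4*j + a)"
      using assms(1) S unfolding sym_psd_def by auto
    also have "W a (4*j + a) = W (4*j + a) (4*j + a)"
      using assms(2,3) a unfolding constr_def by blast
    finally show ?thesis by simp
  qed
  then have "trace_block W j \<le> (\<Sum>a<4. W a a)"
    unfolding trace_block_def by (intro sum_mono) auto
  also have "\<dots> = 1" using assms(2) unfolding constr_def by blast
  finally show ?thesis .
qed

lemma objective_Qmat_nonneg:
  assumes "sym_psd l W" "constr l W" "\<forall>i\<in>{1..l}. csq i \<ge> 0"
  shows "0 \<le> objective l (\<lambda>i. Qmat (x i) (y i)) csq W"
proof -
  have "\<forall>p<4*(l+1). \<forall>q<4*(l+1). W p q = W q p"
    using assms(1) unfolding sym_psd_def by blast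
  then have "objective l (\<lambda>i. Qmat (x i) (y i)) csq W =
      (\<Sum>j\<in>{1..l}. frob_block (Qmat (x j) (y j)) W j + csq j * (1 - trace_block W j))"
    using assms(2) by (rule objective_eq_sum_blocks)
  also have "\<dots> \<ge> 0"
  proof (intro sum_nonneg add_nonneg_nonneg mult_nonneg_nonneg)
    fix j assume j: "j \<in> {1..l}"
    show "0 \<le> frob_block (Qmat (x j) (y j)) W j"
      unfolding Qmat_eq_residual_matrix using j
      by (intro frob_block_transpose_mult_self_nonneg[OF assms(1)]) auto
    show "0 \<le> csq j" using assms(3) j by blast
    show "0 \<le> 1 - trace_block W j" using trace_block_le_1[OF assms(1,2) j] by simp
  qed
  finally show ?thesis .
qed

lemma sym_psd_gram: "sym_psd l (gram \<omega>)"
  unfolding sym_psd_def gram_def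
proof (intro conjI allI impI)
  fix v :: "nat \<Rightarrow> real"
  have "(\<Sum>p<4*(l+1). \<Sum>q<4*(l+1). v p * (\<omega> p * \<omega> q) * v q)
      = (\<Sum>p<4*(l+1). v p * \<omega> p)\<^sup>2"
    by (simp add: power2_eq_square sum_product algebra_simps)
  then show "0 \<le> (\<Sum>p<4*(l+1). \<Sum>q<4*(l+1). v p * (\<omega> p * \<omega> q) * v q)"
    by simp
qed auto

lemma rep_quat_block: "j \<le> l \<Longrightarrow> a < 4 \<Longrightarrow> rep_quat l w (4*j + a) = w $ idx4 a"
  by (simp add: rep_quat_def)

lemma frob_block_gram_rep_quat:
  assumes "j \<le> l"
  shows "frob_block M (gram (rep_quat l w)) j = w \<bullet> (M *v w)"
proof -
  have "frob_block M (gram (rep_quat l w)) j =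
      (\<Sum>a<4. \<Sum>b<4. M $ idx4 a $ idx4 b * (w $ idx4 a * w $ idx4 b))"
    unfolding frob_block_def gram_def using assms by (simp add: rep_quat_block)
  also have "\<dots> = (\<Sum>a<4. \<Sum>k\<in>UNIV. M $ idx4 a $ k * (w $ idx4 a * w $ k))"
    by (intro sum.cong refl) (rule sum_lessThan_4_idx4)
  also have "\<dots> = (\<Sum>i\<in>UNIV. \<Sum>k\<in>UNIV. M $ i $ k * (w $ i * w $ k))"
    by (rule sum_lessThan_4_idx4)
  also have "\<dots> = w \<bullet> (M *v w)"
    by (simp add: inner_vec_def matrix_vector_mult_def sum_distrib_left algebra_simps)
  finally show ?thesis .
qed

lemma trace_block_gram_rep_quat:
  assumes "j \<le> l"
  shows "trace_block (gram (rep_quat l w)) j = (norm w)\<^sup>2"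
proof -
  have "trace_block (gram (rep_quat l w)) j = (\<Sum>a<4. w $ idx4 a * w $ idx4 a)"
    unfolding trace_block_def gram_def using assms by (simp add: rep_quat_block)
  also have "\<dots> = (\<Sum>i\<in>UNIV. w $ i * w $ i)"
    by (rule sum_lessThan_4_idx4)
  also have "\<dots> = (norm w)\<^sup>2"
    by (simp add: power2_norm_eq_inner inner_vec_def)
  finally show ?thesis .
qed

lemma constr_gram_rep_quat:
  assumes "norm w = 1"
  shows "constr l (gram (rep_quat l w))"
  unfolding constr_def
proof
  show "\<forall>i\<in>{1..l}. \<forall>a<4. \<forall>b<4.
      gram (rep_quat l w) a (4*i + b) = gram (rep_quat l w) (4*i + a) (4*i + b)"
    by (simp add: gram_def rep_quat_block rep_quat_block[of 0, simplified])
  show "(\<Sum>a<4. gram (rep_quat l w) a a) = 1"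
    using trace_block_gram_rep_quat[of 0 l w] assms by (simp add: trace_block_def)
qed

lemma objective_gram_rep_quat:
  assumes "norm w = 1"
  shows "objective l (\<lambda>i. Qmat (x i) (y i)) csq (gram (rep_quat l w)) =
    (\<Sum>j\<in>{1..l}. (norm (y j - Rq w *v x j))\<^sup>2)"
proof -
  have "\<forall>p<4*(l+1). \<forall>q<4*(l+1). gram (rep_quat l w) p q = gram (rep_quat l w) q p"
    by (simp add: gram_def)
  then have "objective l (\<lambda>i. Qmat (x i) (y i)) csq (gram (rep_quat l w)) =
      (\<Sum>j\<in>{1..l}. frob_block (Qmat (x j) (y j)) (gram (rep_quat l w)) j
         + csq j * (1 - trace_block (gram (rep_quat l w)) j))"
    using constr_gram_rep_quat[OF assms] by (rule objective_eq_sum_blocks)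
  also have "\<dots> = (\<Sum>j\<in>{1..l}. (norm (y j - Rq w *v x j))\<^sup>2)"
    using assms
    by (intro sum.cong refl)
      (simp add: frob_block_gram_rep_quat trace_block_gram_rep_quat Qmat_eq_residual_matrix
        inner_transpose_mult_mult_self norm_residual_matrix_mult)
  finally show ?thesis .
qed

theorem theorem3p1:
  fixes l :: nat and R0 :: "real^3^3" and w0 :: "real^4"
    and x y :: "nat \<Rightarrow> real^3" and csq :: "nat \<Rightarrow> real"
  assumes "orthogonal_matrix R0" and "det R0 = 1"
    and "norm w0 = 1" and "Rq w0 = R0"
    and "\<forall>i\<in>{1..l}. y i = R0 *v x i"
    and "\<forall>i\<in>{1..l}. csq i \<ge> 0"
  shows "qcqp_global_min l (\<lambda>i. Qmat (x i) (y i)) csq (rep_quat l w0) \<and>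
         sdr_global_min l (\<lambda>i. Qmat (x i) (y i)) csq (gram (rep_quat l w0)) \<and>
         sdr_tight l (\<lambda>i. Qmat (x i) (y i)) csq"
proof -
  let ?Q = "\<lambda>i. Qmat (x i) (y i)" and ?\<omega> = "rep_quat l w0"
  have feasible: "constr l (gram ?\<omega>)"
    using assms(3) by (rule constr_gram_rep_quat)
  have "objective l ?Q csq (gram ?\<omega>) = 0"
    using assms(3-5) by (simp add: objective_gram_rep_quat)
  moreover have "0 \<le> objective l ?Q csq W" if "sym_psd l W" "constr l W" for W
    using that assms(6) by (rule objective_Qmat_nonneg)
  ultimately have sdr: "sdr_global_min l ?Q csq (gram ?\<omega>)"
    and qcqp: "qcqp_global_min l ?Q csq ?\<omega>"
    unfolding sdr_global_min_def qcqp_global_min_def using feasible sym_psd_gram by auto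
  then show ?thesis
    unfolding sdr_tight_def by blast
qed

end
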